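(* For each positive integer $k$, let $w_k$ be the optimal value of the linear program \[ \max\sum_{j=1}^k\alpha_j\ \text{ s.t. } f+\sum_{j=1}^k d_j\le1;\ \alpha_j\le\alpha_{j+1}\ (1\le j<k);\ \alpha_j\le3\alpha_l+3d_j+3d_l\ (1\le j,l\le k);\ x_{jl}\ge\alpha_j-d_l\ (1\le j\le l\le k);\ \sum_{l=j}^k x_{jl}\le f\ (1\le j\le k);\ \alpha_j,d_j,f,x_{jl}\ge0. \] Then $\sup_{k \ge 1} w_k \ge 3.220$. *)

theory Defs
  imports Complex_Main "HOL-Library.Extended_Real"
begin

text \<open>Feasibility for the k-th linear program. Indices j, l range over 1..k;
  values of the variable functions outside that range are irrelevant.\<close>
definition lp_feasible ::
  "nat \<Rightarrow> real \<Rightarrow> (nat \<Rightarrow> real) \<Rightarrow> (nat \<Rightarrow> real) \<Rightarrow> (nat \<Rightarrow> nat \<Rightarrow> real) \<Rightarrow> bool" where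
  "lp_feasible k f \<alpha> d x \<longleftrightarrow>
     f + (\<Sum>j=1..k. d j) \<le> 1 \<and>
     (\<forall>j. 1 \<le> j \<and> j < k \<longrightarrow> \<alpha> j \<le> \<alpha> (j+1)) \<and>
     (\<forall>j\<in>{1..k}. \<forall>l\<in>{1..k}. \<alpha> j \<le> 3 * \<alpha> l + 3 * d j + 3 * d l) \<and>
     (\<forall>j l. 1 \<le> j \<and> j \<le> l \<and> l \<le> k \<longrightarrow> x j l \<ge> \<alpha> j - d l) \<and>
     (\<forall>j\<in>{1..k}. (\<Sum>l=j..k. x j l) \<le> f) \<and>
     (\<forall>j\<in>{1..k}. \<alpha> j \<ge> 0 \<and> d j \<ge> 0) \<and> f \<ge> 0 \<and>
     (\<forall>j l. 1 \<le> j \<and> j \<le> l \<and> l \<le> k \<longrightarrow> x j l \<ge> 0)"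

definition lp_value :: "nat \<Rightarrow> ereal" where
  "lp_value k = Sup {ereal (\<Sum>j=1..k. \<alpha> j) | f \<alpha> d x. lp_feasible k f \<alpha> d x}"

end

theory Submission
  imports Defs
begin

text \<open>The bound is witnessed by an explicit feasible point of the LP for k = 550, given by integers
  up to a common scale factor. Taking x j l = max 0 (\<alpha> j - d l) turns the
  x-constraints into \<Sum>l. max 0 (\<alpha> j - d l) \<le> f. The witness has \<alpha> nondecreasing and d first
  decreasing, then increasing, so for each j the positive terms of this sum are exactly those with
  j \<le> l < q j for a breakpoint q j; with prefix sums of d every such constraint becomes a single
  integer inequality. Dividing by f + \<Sum> d normalises the budget, and the objective then exceeds 3.22.\<close>

lemma lp_value_ge_objective:
  assumes "lp_feasible k f \<alpha> d x"
  shows "ereal (\<Sum>j=1..k. \<alpha> j) \<le> lp_value k"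
  unfolding lp_value_def using assms by (blast intro: Sup_upper)

text \<open>The pairwise constraints \<alpha> j \<le> 3 \<alpha> l + 3 d j + 3 d l hold as soon as one threshold m
  separates every \<alpha> j - 3 d j from every 3 \<alpha> l + 3 d l.\<close>

lemma lp_feasible_pos_part:
  fixes \<alpha> d :: "nat \<Rightarrow> real"
  assumes "f + (\<Sum>j=1..k. d j) \<le> 1" and "0 \<le> f"
    and "\<And>j. 1 \<le> j \<Longrightarrow> j < k \<Longrightarrow> \<alpha> j \<le> \<alpha> (Suc j)"
    and "\<And>j. j \<in> {1..k} \<Longrightarrow> 0 \<le> \<alpha> j \<and> 0 \<le> d j"
    and threshold: "\<And>j. j \<in> {1..k} \<Longrightarrow> \<alpha> j - 3 * d j \<le> m \<and> m \<le> 3 * \<alpha> j + 3 * d j"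
    and "\<And>j. j \<in> {1..k} \<Longrightarrow> (\<Sum>l=j..k. max 0 (\<alpha> j - d l)) \<le> f"
  shows "lp_feasible k f \<alpha> d (\<lambda>j l. max 0 (\<alpha> j - d l))"
proof -
  have "\<alpha> j \<le> 3 * \<alpha> l + 3 * d j + 3 * d l" if "j \<in> {1..k}" "l \<in> {1..k}" for j l
    using threshold[OF that(1)] threshold[OF that(2)] by linarith
  then show ?thesis
    unfolding lp_feasible_def using assms by auto
qed

lemma lp_value_ge_ratio:
  fixes \<alpha> d :: "nat \<Rightarrow> real"
  assumes "0 \<le> f" and total_pos: "0 < f + (\<Sum>j=1..k. d j)"
    and "\<And>j. 1 \<le> j \<Longrightarrow> j < k \<Longrightarrow> \<alpha> j \<le> \<alpha> (Suc j)"
    and "\<And>j. j \<in> {1..k} \<Longrightarrow> 0 \<le> \<alpha> j \<and> 0 \<le> d j"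
    and threshold: "\<And>j. j \<in> {1..k} \<Longrightarrow> \<alpha> j - 3 * d j \<le> m \<and> m \<le> 3 * \<alpha> j + 3 * d j"
    and pos_part_sum: "\<And>j. j \<in> {1..k} \<Longrightarrow> (\<Sum>l=j..k. max 0 (\<alpha> j - d l)) \<le> f"
  shows "ereal ((\<Sum>j=1..k. \<alpha> j) / (f + (\<Sum>j=1..k. d j))) \<le> lp_value k"
proof -
  define s where "s = f + (\<Sum>j=1..k. d j)"
  have s_pos: "0 < s" using total_pos by (simp add: s_def)
  have scaled_sum: "(\<Sum>j\<in>A. g j / s) = (\<Sum>j\<in>A. g j) / s" for g :: "nat \<Rightarrow> real" and A
    by (simp add: sum_divide_distrib)
  have pos_part_scaled: "max 0 (x / s) = max 0 x / s" for x
    using s_pos by (simp add: max_divide_distrib_right)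
  have "lp_feasible k (f / s) (\<lambda>j. \<alpha> j / s) (\<lambda>j. d j / s) (\<lambda>j l. max 0 (\<alpha> j / s - d l / s))"
  proof (rule lp_feasible_pos_part)
    show "f / s + (\<Sum>j=1..k. d j / s) \<le> 1"
      using s_pos by (simp add: sum_divide_distrib[symmetric] add_divide_distrib[symmetric] s_def)
    fix j assume j: "j \<in> {1..k}"
    have "(\<Sum>l=j..k. max 0 (\<alpha> j / s - d l / s)) = (\<Sum>l=j..k. max 0 (\<alpha> j - d l)) / s"
      by (simp add: diff_divide_distrib[symmetric] pos_part_scaled scaled_sum)
    then show "(\<Sum>l=j..k. max 0 (\<alpha> j / s - d l / s)) \<le> f / s"
      using pos_part_sum[OF j] s_pos by (simp add: divide_right_mono)
    have "(\<alpha> j - 3 * d j) / s \<le> m / s" "m / s \<le> (3 * \<alpha> j + 3 * d j) / s"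
      using threshold[OF j] s_pos by (simp_all add: divide_right_mono)
    then show "\<alpha> j / s - 3 * (d j / s) \<le> m / s \<and> m / s \<le> 3 * (\<alpha> j / s) + 3 * (d j / s)"
      by (simp add: diff_divide_distrib add_divide_distrib)
  qed (use assms s_pos in \<open>auto simp: divide_right_mono\<close>)
  then have "ereal (\<Sum>j=1..k. \<alpha> j / s) \<le> lp_value k"
    by (rule lp_value_ge_objective)
  then show ?thesis
    by (subst (asm) scaled_sum) (simp add: s_def)
qed

lemma sum_pos_part_valley:
  fixes D :: "nat \<Rightarrow> 'a::linordered_ab_group_add"
  assumes dec: "\<And>i. j \<le> i \<Longrightarrow> i < k \<Longrightarrow> Suc i < t \<Longrightarrow> D (Suc i) \<le> D i"
    and inc: "\<And>i. j \<le> i \<Longrightarrow> t \<le> i \<Longrightarrow> i < k \<Longrightarrow> D i \<le> D (Suc i)"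
    and q: "j \<le> q" "q \<le> Suc k" and "D j \<le> a"
    and below: "j < q \<Longrightarrow> D (q - 1) \<le> a"
    and above: "q \<le> k \<Longrightarrow> t \<le> q \<and> a \<le> D q"
  shows "(\<Sum>l=j..k. max 0 (a - D l)) = (\<Sum>l=j..<q. a - D l)"
proof -
  have le: "D l \<le> a" if l: "j \<le> l" "l < q" for l
  proof (cases "l < t")
    case True
    from l(1) have "D l \<le> D j"
    proof (induction l rule: dec_induct)
      case (step i)
      with l q have "i < k" by simp
      with step dec[of i] \<open>l < t\<close> show ?case by simp
    qed simp
    with \<open>D j \<le> a\<close> show ?thesis by simp
  next
    case False
    from l(2) have "l \<le> q - 1" by simp
    then have "D l \<le> D (q - 1)"
    proof (induction rule: dec_induct)
      case (step i)
      with False q l have "j \<le> i" "t \<le> i" "i < k" by auto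
      with step.IH inc[of i] show ?case by (meson order_trans)
    qed simp
    with below l show ?thesis by simp
  qed
  have ge: "a \<le> D l" if l: "q \<le> l" "l \<le> k" for l
  proof -
    from l above have "t \<le> q" "a \<le> D q" by auto
    from l(1) have "D q \<le> D l"
    proof (induction rule: dec_induct)
      case (step i)
      then show ?case using inc[of i] \<open>t \<le> q\<close> l(2) q by simp
    qed simp
    with \<open>a \<le> D q\<close> show ?thesis by simp
  qed
  have "{j..k} = {j..<q} \<union> {q..k}" using q by auto
  then have "(\<Sum>l=j..k. max 0 (a - D l))
      = (\<Sum>l=j..<q. max 0 (a - D l)) + (\<Sum>l=q..k. max 0 (a - D l))"
    by (simp add: sum.union_disjoint ivl_disj_int)
  also have "\<dots> = (\<Sum>l=j..<q. a - D l)"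
    using le ge by simp
  finally show ?thesis .
qed

lemma sum_eq_prefix_diff:
  fixes p h :: "nat \<Rightarrow> 'a::ab_group_add"
  assumes "\<And>i. a \<le> i \<Longrightarrow> i < b \<Longrightarrow> p (Suc i) = p i + h i" and "a \<le> b"
  shows "(\<Sum>i=a..<b. h i) = p b - p a"
proof -
  have "(\<Sum>i=a..<b. h i) = (\<Sum>i=a..<b. p (Suc i) - p i)"
    using assms(1) by (intro sum.cong) auto
  also have "\<dots> = p b - p a"
    using sum_Suc_diff' assms(2) .
  finally show ?thesis .
qed

text \<open>Row j of a certificate for the k-th LP: \<alpha> and d are the scaled integral witness, t is where
  d stops decreasing, q j is the breakpoint of row j in the sense of sum_pos_part_valley, and
  p, pa are the prefix sums p j = d 1 + \<dots> + d (j - 1), pa j = \<alpha> 1 + \<dots> + \<alpha> (j - 1).\<close>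

definition valley_cert ::
  "nat \<Rightarrow> nat \<Rightarrow> int \<Rightarrow> int \<Rightarrow> (nat \<Rightarrow> int) \<Rightarrow> (nat \<Rightarrow> int) \<Rightarrow> (nat \<Rightarrow> nat) \<Rightarrow>
    (nat \<Rightarrow> int) \<Rightarrow> (nat \<Rightarrow> int) \<Rightarrow> nat \<Rightarrow> bool" where
  "valley_cert k t f m \<alpha> d q p pa j \<longleftrightarrow>
     0 \<le> d j \<and> d j \<le> \<alpha> j \<and> \<alpha> j - 3 * d j \<le> m \<and> m \<le> 3 * \<alpha> j + 3 * d j \<and>
     (j < k \<longrightarrow> \<alpha> j \<le> \<alpha> (Suc j)) \<and>
     (Suc j < t \<longrightarrow> d (Suc j) \<le> d j) \<and> (t \<le> j \<and> j < k \<longrightarrow> d j \<le> d (Suc j)) \<and>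
     p (Suc j) = p j + d j \<and> pa (Suc j) = pa j + \<alpha> j \<and>
     j \<le> q j \<and> q j \<le> Suc k \<and> (q j \<le> k \<longrightarrow> t \<le> q j \<and> \<alpha> j \<le> d (q j)) \<and>
     (j < q j \<longrightarrow> d (q j - 1) \<le> \<alpha> j) \<and>
     int (q j - j) * \<alpha> j - (p (q j) - p j) \<le> f"

lemma valley_cert_pos_part_sum:
  assumes cert: "\<forall>i\<in>{1..k}. valley_cert k t f m \<alpha> d q p pa i" and j: "j \<in> {1..k}"
  shows "(\<Sum>l=j..k. max 0 (\<alpha> j - d l)) \<le> f"
proof -
  have row: "valley_cert k t f m \<alpha> d q p pa i" if "j \<le> i" "i \<le> k" for i
    using cert j that by auto
  from row[of j] j have q: "j \<le> q j" "q j \<le> Suc k"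
    and bound: "int (q j - j) * \<alpha> j - (p (q j) - p j) \<le> f"
    by (auto simp: valley_cert_def)
  have "(\<Sum>l=j..k. max 0 (\<alpha> j - d l)) = (\<Sum>l=j..<q j. \<alpha> j - d l)"
  proof (rule sum_pos_part_valley[where t = t])
    show "d (Suc i) \<le> d i" if "j \<le> i" "i < k" "Suc i < t" for i
      using row[of i] that by (simp add: valley_cert_def)
    show "d i \<le> d (Suc i)" if "j \<le> i" "t \<le> i" "i < k" for i
      using row[of i] that by (simp add: valley_cert_def)
  next
    show "j < q j \<Longrightarrow> d (q j - 1) \<le> \<alpha> j" "q j \<le> k \<Longrightarrow> t \<le> q j \<and> \<alpha> j \<le> d (q j)"
      "d j \<le> \<alpha> j"
      using row[of j] j by (simp_all add: valley_cert_def)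
  qed (use q in simp_all)
  also have "\<dots> = int (q j - j) * \<alpha> j - (\<Sum>l=j..<q j. d l)"
    by (simp add: sum_subtractf)
  also have "(\<Sum>l=j..<q j. d l) = p (q j) - p j"
  proof (rule sum_eq_prefix_diff)
    show "p (Suc i) = p i + d i" if "j \<le> i" "i < q j" for i
      using row[of i] that q by (simp add: valley_cert_def)
  qed (use q in simp)
  finally show ?thesis
    using bound by simp
qed

lemma lp_value_ge_valley_cert:
  assumes cert: "\<forall>j\<in>{1..k}. valley_cert k t f m \<alpha> d q p pa j"
    and "p 1 = 0" "pa 1 = 0" "0 \<le> f" "0 < f + p (Suc k)"
  shows "ereal (real_of_int (pa (Suc k)) / real_of_int (f + p (Suc k))) \<le> lp_value k"
proof -
  have row: "valley_cert k t f m \<alpha> d q p pa j" if "j \<in> {1..k}" for j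
    using cert that by blast
  have prefix: "(\<Sum>j=1..k. h j) = s (Suc k)"
    if "s 1 = 0" "\<And>j. j \<in> {1..k} \<Longrightarrow> s (Suc j) = s j + h j" for s h :: "nat \<Rightarrow> int"
    using sum_eq_prefix_diff[of 1 "Suc k" s h] that by (simp add: atLeastLessThanSuc_atLeastAtMost)
  have sum_d: "(\<Sum>j=1..k. real_of_int (d j)) = real_of_int (p (Suc k))"
    unfolding of_int_sum[symmetric]
    by (rule arg_cong[OF prefix]) (use assms(2) row in \<open>auto simp: valley_cert_def\<close>)
  have sum_\<alpha>: "(\<Sum>j=1..k. real_of_int (\<alpha> j)) = real_of_int (pa (Suc k))"
    unfolding of_int_sum[symmetric]
    by (rule arg_cong[OF prefix]) (use assms(3) row in \<open>auto simp: valley_cert_def\<close>)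
  have "ereal ((\<Sum>j=1..k. real_of_int (\<alpha> j)) / (real_of_int f + (\<Sum>j=1..k. real_of_int (d j))))
      \<le> lp_value k"
  proof (rule lp_value_ge_ratio[where m = "real_of_int m"])
    show "0 \<le> real_of_int f" "0 < real_of_int f + (\<Sum>j=1..k. real_of_int (d j))"
      using assms(4,5) unfolding sum_d by simp_all
    show "real_of_int (\<alpha> j) \<le> real_of_int (\<alpha> (Suc j))" if "1 \<le> j" "j < k" for j
      using row[of j] that by (simp add: valley_cert_def)
    fix j assume j: "j \<in> {1..k}"
    then show "0 \<le> real_of_int (\<alpha> j) \<and> 0 \<le> real_of_int (d j)"
      "real_of_int (\<alpha> j) - 3 * real_of_int (d j) \<le> real_of_int m \<and>
        real_of_int m \<le> 3 * real_of_int (\<alpha> j) + 3 * real_of_int (d j)"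
      using row[OF j] by (auto simp: valley_cert_def)
    have "(\<Sum>l=j..k. max 0 (real_of_int (\<alpha> j) - real_of_int (d l)))
        = real_of_int (\<Sum>l=j..k. max 0 (\<alpha> j - d l))"
      by (simp add: of_int_max)
    then show "(\<Sum>l=j..k. max 0 (real_of_int (\<alpha> j) - real_of_int (d l))) \<le> real_of_int f"
      using valley_cert_pos_part_sum[OF cert j] by linarith
  qed
  then show ?thesis
    unfolding sum_d sum_\<alpha> by simp
qed

text \<open>The witness for k = 550, scaled so that all entries are integers: row j of the table is
  (\<alpha> j, d j, q j, p j, pa j) in the notation of valley_cert, with f = 3913613, m = 40506 and
  t = 120. Row 551 only carries the totals p 551 and pa 551.\<close>

definition cert_block_0 :: "(int \<times> int \<times> nat \<times> int \<times> int) list" where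
  "cert_block_0 = [
    (10332, 3170, 432, 0, 0), (10349, 3154, 432, 3170, 10332), (10366, 3137, 432, 6324, 20681),
    (10383, 3120, 432, 9461, 31047), (10400, 3103, 432, 12581, 41430), (10417, 3086, 432, 15684, 51830),
    (10434, 3069, 433, 18770, 62247), (10452, 3051, 433, 21839, 72681), (10469, 3034, 433, 24890, 83133),
    (10487, 3016, 433, 27924, 93602), (10504, 2999, 433, 30940, 104089), (10522, 2981, 433, 33939, 114593),
    (10540, 2963, 433, 36920, 125115), (10558, 2945, 433, 39883, 135655), (10576, 2926, 433, 42828, 146213),
    (10595, 2908, 433, 45754, 156789), (10613, 2890, 433, 48662, 167384), (10632, 2871, 433, 51552, 177997),
    (10651, 2852, 433, 54423, 188629), (10669, 2833, 434, 57275, 199280), (10688, 2815, 434, 60108, 209949),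
    (10707, 2795, 434, 62923, 220637), (10727, 2776, 434, 65718, 231344), (10746, 2757, 434, 68494, 242071)]"

definition cert_block_1 :: "(int \<times> int \<times> nat \<times> int \<times> int) list" where
  "cert_block_1 = [
    (10766, 2737, 434, 71251, 252817), (10785, 2718, 434, 73988, 263583), (10805, 2698, 434, 76706, 274368),
    (10825, 2678, 434, 79404, 285173), (10845, 2658, 434, 82082, 295998), (10865, 2637, 434, 84740, 306843),
    (10886, 2617, 435, 87377, 317708), (10906, 2596, 435, 89994, 328594), (10927, 2576, 435, 92590, 339500),
    (10948, 2555, 435, 95166, 350427), (10969, 2534, 435, 97721, 361375), (10990, 2513, 435, 100255, 372344),
    (11011, 2492, 435, 102768, 383334), (11033, 2470, 435, 105260, 394345), (11054, 2448, 435, 107730, 405378),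
    (11076, 2427, 435, 110178, 416432), (11098, 2405, 435, 112605, 427508), (11120, 2383, 436, 115010, 438606),
    (11142, 2360, 436, 117393, 449726), (11165, 2338, 436, 119753, 460868), (11187, 2315, 436, 122091, 472033),
    (11210, 2293, 436, 124406, 483220), (11233, 2270, 436, 126699, 494430), (11256, 2247, 436, 128969, 505663)]"

definition cert_block_2 :: "(int \<times> int \<times> nat \<times> int \<times> int) list" where
  "cert_block_2 = [
    (11279, 2223, 436, 131216, 516919), (11303, 2200, 436, 133439, 528198), (11327, 2176, 436, 135639, 539501),
    (11350, 2152, 437, 137815, 550828), (11374, 2129, 437, 139967, 562178), (11398, 2104, 437, 142096, 573552),
    (11423, 2080, 437, 144200, 584950), (11447, 2056, 437, 146280, 596373), (11472, 2031, 437, 148336, 607820),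
    (11497, 2006, 437, 150367, 619292), (11522, 1981, 437, 152373, 630789), (11547, 1955, 437, 154354, 642311),
    (11573, 1930, 438, 156309, 653858), (11599, 1904, 438, 158239, 665431), (11624, 1878, 438, 160143, 677030),
    (11650, 1852, 438, 162021, 688654), (11677, 1826, 438, 163873, 700304), (11703, 1800, 438, 165699, 711981),
    (11730, 1773, 438, 167499, 723684), (11757, 1746, 438, 169272, 735414), (11784, 1719, 438, 171018, 747171),
    (11811, 1692, 439, 172737, 758955), (11839, 1664, 439, 174429, 770766), (11866, 1636, 439, 176093, 782605)]"

definition cert_block_3 :: "(int \<times> int \<times> nat \<times> int \<times> int) list" where
  "cert_block_3 = [
    (11894, 1608, 439, 177729, 794471), (11923, 1580, 439, 179337, 806365), (11951, 1552, 439, 180917, 818288),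
    (11980, 1523, 439, 182469, 830239), (12009, 1494, 439, 183992, 842219), (12038, 1465, 439, 185486, 854228),
    (12067, 1436, 440, 186951, 866266), (12097, 1406, 440, 188387, 878333), (12126, 1376, 440, 189793, 890430),
    (12156, 1346, 440, 191169, 902556), (12187, 1316, 440, 192515, 914712), (12217, 1286, 440, 193831, 926899),
    (12248, 1255, 440, 195117, 939116), (12279, 1224, 440, 196372, 951364), (12310, 1193, 441, 197596, 963643),
    (12342, 1161, 441, 198789, 975953), (12374, 1129, 441, 199950, 988295), (12406, 1097, 441, 201079, 1000669),
    (12438, 1065, 441, 202176, 1013075), (12471, 1032, 441, 203241, 1025513), (12503, 999, 441, 204273, 1037984),
    (12537, 966, 441, 205272, 1050487), (12570, 933, 442, 206238, 1063024), (12604, 899, 442, 207171, 1075594)]"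

definition cert_block_4 :: "(int \<times> int \<times> nat \<times> int \<times> int) list" where
  "cert_block_4 = [
    (12637, 865, 442, 208070, 1088198), (12672, 831, 442, 208935, 1100835), (12706, 797, 442, 209766, 1113507),
    (12741, 762, 442, 210563, 1126213), (12776, 727, 442, 211325, 1138954), (12812, 691, 443, 212052, 1151730),
    (12847, 656, 443, 212743, 1164542), (12883, 620, 443, 213399, 1177389), (12919, 583, 443, 214019, 1190272),
    (12956, 547, 443, 214602, 1203191), (12993, 510, 443, 215149, 1216147), (13030, 473, 443, 215659, 1229140),
    (13068, 435, 444, 216132, 1242170), (13106, 397, 444, 216567, 1255238), (13144, 359, 444, 216964, 1268344),
    (13182, 320, 444, 217323, 1281488), (13221, 282, 444, 217643, 1294670), (13260, 242, 444, 217925, 1307891),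
    (13300, 203, 444, 218167, 1321151), (13340, 163, 445, 218370, 1334451), (13380, 123, 445, 218533, 1347791),
    (13421, 82, 445, 218656, 1361171), (13462, 41, 445, 218738, 1374592), (13503, 0, 445, 218779, 1388054)]"

definition cert_block_5 :: "(int \<times> int \<times> nat \<times> int \<times> int) list" where
  "cert_block_5 = [
    (13545, 0, 445, 218779, 1401557), (13586, 0, 445, 218779, 1415102), (13629, 0, 446, 218779, 1428688),
    (13671, 0, 446, 218779, 1442317), (13713, 0, 446, 218779, 1455988), (13756, 0, 446, 218779, 1469701),
    (13799, 0, 446, 218779, 1483457), (13843, 0, 446, 218779, 1497256), (13886, 0, 447, 218779, 1511099),
    (13930, 0, 447, 218779, 1524985), (13974, 0, 447, 218779, 1538915), (14019, 0, 447, 218779, 1552889),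
    (14063, 0, 447, 218779, 1566908), (14108, 0, 447, 218779, 1580971), (14153, 0, 448, 218779, 1595079),
    (14199, 0, 448, 218779, 1609232), (14244, 0, 448, 218779, 1623431), (14290, 0, 448, 218779, 1637675),
    (14337, 0, 448, 218779, 1651965), (14383, 0, 448, 218779, 1666302), (14430, 0, 449, 218779, 1680685),
    (14477, 0, 449, 218779, 1695115), (14524, 0, 449, 218779, 1709592), (14572, 0, 449, 218779, 1724116)]"

definition cert_block_6 :: "(int \<times> int \<times> nat \<times> int \<times> int) list" where
  "cert_block_6 = [
    (14620, 0, 449, 218779, 1738688), (14668, 0, 449, 218779, 1753308), (14717, 0, 450, 218779, 1767976),
    (14765, 0, 450, 218779, 1782693), (14815, 0, 450, 218779, 1797458), (14864, 0, 450, 218779, 1812273),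
    (14914, 0, 450, 218779, 1827137), (14964, 0, 450, 218779, 1842051), (15014, 0, 451, 218779, 1857015),
    (15065, 0, 451, 218779, 1872029), (15115, 0, 451, 218779, 1887094), (15167, 0, 451, 218779, 1902209),
    (15218, 0, 451, 218779, 1917376), (15270, 0, 451, 218779, 1932594), (15322, 0, 452, 218779, 1947864),
    (15375, 0, 452, 218779, 1963186), (15428, 0, 452, 218779, 1978561), (15481, 0, 452, 218779, 1993989),
    (15534, 0, 452, 218779, 2009470), (15588, 0, 452, 218779, 2025004), (15643, 0, 453, 218779, 2040592),
    (15697, 0, 453, 218779, 2056235), (15752, 0, 453, 218779, 2071932), (15807, 0, 453, 218779, 2087684)]"

definition cert_block_7 :: "(int \<times> int \<times> nat \<times> int \<times> int) list" where
  "cert_block_7 = [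
    (15863, 0, 453, 218779, 2103491), (15919, 0, 454, 218779, 2119354), (15975, 0, 454, 218779, 2135273),
    (16032, 0, 454, 218779, 2151248), (16089, 0, 454, 218779, 2167280), (16146, 0, 454, 218779, 2183369),
    (16204, 0, 454, 218779, 2199515), (16262, 0, 455, 218779, 2215719), (16321, 0, 455, 218779, 2231981),
    (16380, 0, 455, 218779, 2248302), (16439, 0, 455, 218779, 2264682), (16499, 0, 455, 218779, 2281121),
    (16559, 0, 456, 218779, 2297620), (16619, 0, 456, 218779, 2314179), (16680, 0, 456, 218779, 2330798),
    (16742, 0, 456, 218779, 2347478), (16803, 0, 456, 218779, 2364220), (16866, 0, 457, 218779, 2381023),
    (16928, 0, 457, 218779, 2397889), (16991, 0, 457, 218779, 2414817), (17054, 0, 457, 218779, 2431808),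
    (17118, 0, 457, 218779, 2448862), (17183, 0, 457, 218779, 2465980), (17247, 0, 458, 218779, 2483163)]"

definition cert_block_8 :: "(int \<times> int \<times> nat \<times> int \<times> int) list" where
  "cert_block_8 = [
    (17312, 0, 458, 218779, 2500410), (17378, 0, 458, 218779, 2517722), (17444, 0, 458, 218779, 2535100),
    (17511, 0, 458, 218779, 2552544), (17578, 0, 459, 218779, 2570055), (17645, 0, 459, 218779, 2587633),
    (17713, 0, 459, 218779, 2605278), (17781, 0, 459, 218779, 2622991), (17850, 0, 459, 218779, 2640772),
    (17919, 0, 460, 218779, 2658622), (17989, 0, 460, 218779, 2676541), (18059, 0, 460, 218779, 2694530),
    (18130, 0, 460, 218779, 2712589), (18202, 0, 460, 218779, 2730719), (18273, 0, 461, 218779, 2748921),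
    (18346, 0, 461, 218779, 2767194), (18418, 0, 461, 218779, 2785540), (18492, 0, 461, 218779, 2803958),
    (18566, 0, 461, 218779, 2822450), (18640, 0, 462, 218779, 2841016), (18715, 0, 462, 218779, 2859656),
    (18790, 0, 462, 218779, 2878371), (18866, 0, 462, 218779, 2897161), (18943, 0, 462, 218779, 2916027)]"

definition cert_block_9 :: "(int \<times> int \<times> nat \<times> int \<times> int) list" where
  "cert_block_9 = [
    (19020, 0, 463, 218779, 2934970), (19098, 0, 463, 218779, 2953990), (19176, 0, 463, 218779, 2973088),
    (19255, 0, 463, 218779, 2992264), (19334, 0, 464, 218779, 3011519), (19414, 0, 464, 218779, 3030853),
    (19495, 0, 464, 218779, 3050267), (19576, 0, 464, 218779, 3069762), (19658, 0, 464, 218779, 3089338),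
    (19740, 0, 465, 218779, 3108996), (19823, 0, 465, 218779, 3128736), (19907, 0, 465, 218779, 3148559),
    (19991, 0, 465, 218779, 3168466), (20076, 0, 465, 218779, 3188457), (20162, 0, 466, 218779, 3208533),
    (20248, 0, 466, 218779, 3228695), (20335, 0, 466, 218779, 3248943), (20423, 0, 466, 218779, 3269278),
    (20511, 0, 467, 218779, 3289701), (20600, 0, 467, 218779, 3310212), (20689, 0, 467, 218779, 3330812),
    (20780, 0, 467, 218779, 3351501), (20871, 0, 467, 218779, 3372281), (20962, 0, 468, 218779, 3393152)]"

definition cert_block_10 :: "(int \<times> int \<times> nat \<times> int \<times> int) list" where
  "cert_block_10 = [
    (21055, 0, 468, 218779, 3414114), (21148, 0, 468, 218779, 3435169), (21242, 0, 468, 218779, 3456317),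
    (21336, 0, 469, 218779, 3477559), (21432, 0, 469, 218779, 3498895), (21528, 0, 469, 218779, 3520327),
    (21625, 0, 469, 218779, 3541855), (21722, 0, 470, 218779, 3563480), (21821, 0, 470, 218779, 3585202),
    (21920, 0, 470, 218779, 3607023), (22020, 0, 470, 218779, 3628943), (22121, 0, 470, 218779, 3650963),
    (22223, 0, 471, 218779, 3673084), (22325, 0, 471, 218779, 3695307), (22428, 0, 471, 218779, 3717632),
    (22533, 0, 471, 218779, 3740060), (22638, 0, 472, 218779, 3762593), (22744, 0, 472, 218779, 3785231),
    (22850, 0, 472, 218779, 3807975), (22958, 0, 472, 218779, 3830825), (23067, 0, 473, 218779, 3853783),
    (23176, 0, 473, 218779, 3876850), (23286, 0, 473, 218779, 3900026), (23398, 0, 473, 218779, 3923312)]"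

definition cert_block_11 :: "(int \<times> int \<times> nat \<times> int \<times> int) list" where
  "cert_block_11 = [
    (23510, 0, 474, 218779, 3946710), (23623, 0, 474, 218779, 3970220), (23737, 0, 474, 218779, 3993843),
    (23853, 0, 474, 218779, 4017580), (23969, 0, 475, 218779, 4041433), (24086, 0, 475, 218779, 4065402),
    (24204, 0, 475, 218779, 4089488), (24323, 0, 475, 218779, 4113692), (24443, 0, 476, 218779, 4138015),
    (24564, 0, 476, 218779, 4162458), (24687, 0, 476, 218779, 4187022), (24810, 0, 476, 218779, 4211709),
    (24935, 0, 477, 218779, 4236519), (25060, 0, 477, 218779, 4261454), (25187, 0, 477, 218779, 4286514),
    (25314, 0, 477, 218779, 4311701), (25443, 0, 478, 218779, 4337015), (25573, 0, 478, 218779, 4362458),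
    (25704, 0, 478, 218779, 4388031), (25837, 0, 478, 218779, 4413735), (25971, 0, 479, 218779, 4439572),
    (26105, 0, 479, 218779, 4465543), (26241, 0, 479, 218779, 4491648), (26379, 0, 479, 218779, 4517889)]"

definition cert_block_12 :: "(int \<times> int \<times> nat \<times> int \<times> int) list" where
  "cert_block_12 = [
    (26517, 0, 480, 218779, 4544268), (26657, 0, 480, 218779, 4570785), (26798, 0, 480, 218779, 4597442),
    (26940, 0, 480, 218779, 4624240), (27084, 0, 481, 218779, 4651180), (27229, 0, 481, 218779, 4678264),
    (27375, 0, 481, 218779, 4705493), (27523, 0, 482, 218779, 4732868), (27672, 0, 482, 218779, 4760391),
    (27822, 0, 482, 218779, 4788063), (27974, 0, 483, 218779, 4815885), (28127, 0, 483, 218779, 4843859),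
    (28281, 0, 483, 218779, 4871986), (28437, 0, 484, 218779, 4900267), (28594, 0, 484, 218779, 4928704),
    (28753, 0, 484, 218779, 4957298), (28914, 0, 485, 218779, 4986051), (29075, 0, 485, 218779, 5014965),
    (29239, 0, 485, 218779, 5044040), (29404, 0, 486, 218779, 5073279), (29570, 0, 486, 218779, 5102683),
    (29738, 0, 486, 218779, 5132253), (29907, 0, 487, 218779, 5161991), (30078, 0, 487, 218779, 5191898)]"

definition cert_block_13 :: "(int \<times> int \<times> nat \<times> int \<times> int) list" where
  "cert_block_13 = [
    (30251, 0, 487, 218779, 5221976), (30426, 0, 488, 218779, 5252227), (30602, 0, 488, 218779, 5282653),
    (30780, 0, 488, 218779, 5313255), (30960, 0, 489, 218779, 5344035), (31141, 0, 489, 218779, 5374995),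
    (31324, 0, 489, 218779, 5406136), (31509, 0, 490, 218779, 5437460), (31696, 0, 490, 218779, 5468969),
    (31884, 0, 490, 218779, 5500665), (32075, 0, 491, 218779, 5532549), (32267, 0, 491, 218779, 5564624),
    (32462, 0, 491, 218779, 5596891), (32658, 0, 492, 218779, 5629353), (32856, 0, 492, 218779, 5662011),
    (33057, 0, 492, 218779, 5694867), (33259, 0, 493, 218779, 5727924), (33463, 0, 493, 218779, 5761183),
    (33670, 0, 493, 218779, 5794646), (33879, 0, 494, 218779, 5828316), (34089, 0, 494, 218779, 5862195),
    (34302, 0, 494, 218779, 5896284), (34518, 0, 495, 218779, 5930586), (34735, 0, 495, 218779, 5965104)]"

definition cert_block_14 :: "(int \<times> int \<times> nat \<times> int \<times> int) list" where
  "cert_block_14 = [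
    (34955, 0, 495, 218779, 5999839), (35177, 0, 496, 218779, 6034794), (35401, 0, 496, 218779, 6069971),
    (35628, 0, 496, 218779, 6105372), (35858, 0, 497, 218779, 6141000), (36089, 0, 497, 218779, 6176858),
    (36323, 0, 497, 218779, 6212947), (36560, 0, 498, 218779, 6249270), (36799, 0, 498, 218779, 6285830),
    (37041, 0, 498, 218779, 6322629), (37286, 0, 499, 218779, 6359670), (37533, 0, 499, 218779, 6396956),
    (37783, 0, 499, 218779, 6434489), (38036, 0, 500, 218779, 6472272), (38292, 0, 500, 218779, 6510308),
    (38550, 0, 500, 218779, 6548600), (38812, 0, 501, 218779, 6587150), (39076, 0, 501, 218779, 6625962),
    (39344, 0, 501, 218779, 6665038), (39614, 0, 502, 218779, 6704382), (39887, 0, 502, 218779, 6743996),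
    (40164, 0, 502, 218779, 6783883), (40444, 0, 503, 218779, 6824047), (40725, 73, 503, 218779, 6864491)]"

definition cert_block_15 :: "(int \<times> int \<times> nat \<times> int \<times> int) list" where
  "cert_block_15 = [
    (41010, 168, 503, 218852, 6905216), (41301, 265, 504, 219020, 6946226), (41592, 362, 504, 219285, 6987527),
    (41886, 460, 504, 219647, 7029119), (42183, 559, 505, 220107, 7071005), (42483, 659, 505, 220666, 7113188),
    (42786, 760, 505, 221325, 7155671), (43089, 861, 506, 222085, 7198457), (43398, 964, 506, 222946, 7241546),
    (43710, 1068, 506, 223910, 7284944), (44025, 1173, 507, 224978, 7328654), (44343, 1279, 507, 226151, 7372679),
    (44664, 1386, 507, 227430, 7417022), (44988, 1494, 508, 228816, 7461686), (45315, 1603, 508, 230310, 7506674),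
    (45648, 1714, 508, 231913, 7551989), (45981, 1825, 509, 233627, 7597637), (46317, 1937, 509, 235452, 7643618),
    (46659, 2051, 509, 237389, 7689935), (47004, 2166, 510, 239440, 7736594), (47352, 2282, 510, 241606, 7783598),
    (47703, 2399, 510, 243888, 7830950), (48060, 2518, 511, 246287, 7878653), (48420, 2638, 511, 248805, 7926713)]"

definition cert_block_16 :: "(int \<times> int \<times> nat \<times> int \<times> int) list" where
  "cert_block_16 = [
    (48783, 2759, 511, 251443, 7975133), (49149, 2881, 512, 254202, 8023916), (49521, 3005, 512, 257083, 8073065),
    (49896, 3130, 512, 260088, 8122586), (50277, 3257, 512, 263218, 8172482), (50658, 3384, 513, 266475, 8222759),
    (51045, 3513, 513, 269859, 8273417), (51438, 3644, 513, 273372, 8324462), (51834, 3776, 514, 277016, 8375900),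
    (52236, 3910, 514, 280792, 8427734), (52641, 4045, 514, 284702, 8479970), (53052, 4182, 515, 288747, 8532611),
    (53466, 4320, 515, 292929, 8585663), (53886, 4460, 515, 297249, 8639129), (54309, 4601, 516, 301709, 8693015),
    (54738, 4744, 516, 306310, 8747324), (55173, 4889, 516, 311054, 8802062), (55614, 5036, 517, 315943, 8857235),
    (56058, 5184, 517, 320979, 8912849), (56508, 5334, 517, 326163, 8968907), (56967, 5487, 517, 331497, 9025415),
    (57426, 5640, 518, 336984, 9082382), (57894, 5796, 518, 342624, 9139808), (58368, 5954, 518, 348420, 9197702)]"

definition cert_block_17 :: "(int \<times> int \<times> nat \<times> int \<times> int) list" where
  "cert_block_17 = [
    (58845, 6113, 519, 354374, 9256070), (59331, 6275, 519, 360487, 9314915), (59820, 6438, 519, 366762, 9374246),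
    (60321, 6605, 520, 373200, 9434066), (60822, 6772, 520, 379805, 9494387), (61332, 6942, 520, 386577, 9555209),
    (61851, 7115, 520, 393519, 9616541), (62373, 7289, 521, 400634, 9678392), (62904, 7466, 521, 407923, 9740765),
    (63441, 7645, 521, 415389, 9803669), (63987, 7827, 522, 423034, 9867110), (64536, 8010, 522, 430861, 9931097),
    (65097, 8197, 522, 438871, 9995633), (65667, 8387, 522, 447068, 10060730), (66240, 8578, 523, 455455, 10126397),
    (66822, 8772, 523, 464033, 10192637), (67416, 8970, 523, 472805, 10259459), (68016, 9170, 524, 481775, 10326875),
    (68622, 9372, 524, 490945, 10394891), (69240, 9578, 524, 500317, 10463513), (69867, 9787, 524, 509895, 10532753),
    (70503, 9999, 525, 519682, 10602620), (71145, 10213, 525, 529681, 10673123), (71802, 10432, 525, 539894, 10744268)]"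

definition cert_block_18 :: "(int \<times> int \<times> nat \<times> int \<times> int) list" where
  "cert_block_18 = [
    (72465, 10653, 526, 550326, 10816070), (73137, 10877, 526, 560979, 10888535), (73824, 11106, 526, 571856, 10961672),
    (74520, 11338, 526, 582962, 11035496), (75225, 11573, 527, 594300, 11110016), (75939, 11811, 527, 605873, 11185241),
    (76668, 12054, 527, 617684, 11261180), (77412, 12302, 527, 629738, 11337848), (78159, 12551, 528, 642040, 11415260),
    (78924, 12806, 528, 654591, 11493419), (79701, 13065, 528, 667397, 11572343), (80493, 13329, 529, 680462, 11652044),
    (81291, 13595, 529, 693791, 11732537), (82107, 13867, 529, 707386, 11813828), (82938, 14144, 529, 721253, 11895935),
    (83784, 14426, 530, 735397, 11978873), (84639, 14711, 530, 749823, 12062657), (85512, 15002, 530, 764534, 12147296),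
    (86406, 15300, 530, 779536, 12232808), (87309, 15601, 531, 794836, 12319214), (88227, 15907, 531, 810437, 12406523),
    (89166, 16220, 531, 826344, 12494750), (90126, 16540, 531, 842564, 12583916), (91095, 16863, 532, 859104, 12674042)]"

definition cert_block_19 :: "(int \<times> int \<times> nat \<times> int \<times> int) list" where
  "cert_block_19 = [
    (92085, 17193, 532, 875967, 12765137), (93099, 17531, 532, 893160, 12857222), (94131, 17875, 533, 910691, 12950321),
    (95178, 18224, 533, 928566, 13044452), (96246, 18580, 533, 946790, 13139630), (97341, 18945, 533, 965370, 13235876),
    (98457, 19317, 534, 984315, 13333217), (99588, 19694, 534, 1003632, 13431674), (100746, 20080, 534, 1023326, 13531262),
    (101931, 20475, 534, 1043406, 13632008), (103146, 20880, 535, 1063881, 13733939), (104373, 21289, 535, 1084761, 13837085),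
    (105630, 21708, 535, 1106050, 13941458), (106923, 22139, 535, 1127758, 14047088), (108246, 22580, 536, 1149897, 14154011),
    (109584, 23026, 536, 1172477, 14262257), (110958, 23484, 536, 1195503, 14371841), (112368, 23954, 536, 1218987, 14482799),
    (113817, 24437, 537, 1242941, 14595167), (115281, 24925, 537, 1267378, 14708984), (116787, 25427, 537, 1292303, 14824265),
    (118335, 25943, 537, 1317730, 14941052), (119931, 26475, 537, 1343673, 15059387), (121545, 27013, 538, 1370148, 15179318)]"

definition cert_block_20 :: "(int \<times> int \<times> nat \<times> int \<times> int) list" where
  "cert_block_20 = [
    (122895, 27463, 551, 1397161, 15300863), (124278, 27924, 551, 1424624, 15423758), (125694, 28396, 551, 1452548, 15548036),
    (127149, 28881, 551, 1480944, 15673730), (128637, 29377, 551, 1509825, 15800879), (130164, 29886, 551, 1539202, 15929516),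
    (131730, 30408, 551, 1569088, 16059680), (133338, 30944, 551, 1599496, 16191410), (134991, 31495, 551, 1630440, 16324748),
    (136686, 32060, 551, 1661935, 16459739), (138432, 32642, 551, 1693995, 16596425), (140223, 33239, 551, 1726637, 16734857),
    (142068, 33854, 551, 1759876, 16875080), (143967, 34487, 551, 1793730, 17017148), (145923, 35139, 551, 1828217, 17161115),
    (147936, 35810, 551, 1863356, 17307038), (150012, 36502, 551, 1899166, 17454974), (152154, 37216, 551, 1935668, 17604986),
    (154365, 37953, 551, 1972884, 17757140), (156648, 38714, 551, 2010837, 17911505), (159006, 39500, 551, 2049551, 18068153),
    (161445, 40313, 551, 2089051, 18227159), (163968, 41154, 551, 2129364, 18388604), (166581, 42025, 551, 2170518, 18552572)]"

definition cert_block_21 :: "(int \<times> int \<times> nat \<times> int \<times> int) list" where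
  "cert_block_21 = [
    (169290, 42928, 551, 2212543, 18719153), (172098, 43864, 551, 2255471, 18888443), (175014, 44836, 551, 2299335, 19060541),
    (178041, 45845, 551, 2344171, 19235555), (181188, 46894, 551, 2390016, 19413596), (184464, 47986, 551, 2436910, 19594784),
    (187875, 49123, 551, 2484896, 19779248), (191433, 50309, 551, 2534019, 19967123), (195147, 51547, 551, 2584328, 20158556),
    (199029, 52841, 551, 2635875, 20353703), (203088, 54194, 551, 2688716, 20552732), (207342, 55612, 551, 2742910, 20755820),
    (211806, 57100, 551, 2798522, 20963162), (216495, 58663, 551, 2855622, 21174968), (221427, 60307, 551, 2914285, 21391463),
    (226623, 62039, 551, 2974592, 21612890), (232110, 63868, 551, 3036631, 21839513), (237912, 65802, 551, 3100499, 22071623),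
    (244059, 67851, 551, 3166301, 22309535), (250584, 70026, 551, 3234152, 22553594), (257529, 72341, 551, 3304178, 22804178),
    (264936, 74810, 551, 3376519, 23061707), (272859, 77451, 551, 3451329, 23326643), (281355, 80283, 551, 3528780, 23599502)]"

definition cert_block_22 :: "(int \<times> int \<times> nat \<times> int \<times> int) list" where
  "cert_block_22 = [
    (290496, 83330, 551, 3609063, 23880857), (300360, 86618, 551, 3692393, 24171353), (311046, 90180, 551, 3779011, 24471713),
    (322671, 94055, 551, 3869191, 24782759), (335373, 98289, 551, 3963246, 25105430), (349320, 102938, 551, 4061535, 25440803),
    (364719, 108071, 551, 4164473, 25790123), (381828, 113774, 551, 4272544, 26154842), (400974, 120156, 551, 4386318, 26536670),
    (405147, 121547, 551, 4506474, 26937644), (405147, 121547, 551, 4628021, 27342791), (405147, 121547, 551, 4749568, 27747938),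
    (405147, 121547, 551, 4871115, 28153085), (405147, 121547, 551, 4992662, 28558232), (405147, 121547, 551, 5114209, 28963379),
    (405147, 121547, 551, 5235756, 29368526), (405147, 121547, 551, 5357303, 29773673), (405147, 121547, 551, 5478850, 30178820),
    (405147, 121547, 551, 5600397, 30583967), (405147, 121547, 551, 5721944, 30989114), (405147, 121547, 551, 5843491, 31394261),
    (405147, 121547, 551, 5965038, 31799408), (0, 0, 0, 6086585, 32204555)]"

definition cert_blocks :: "(int \<times> int \<times> nat \<times> int \<times> int) list list" where
  "cert_blocks = [
    cert_block_0, cert_block_1, cert_block_2, cert_block_3, cert_block_4, cert_block_5,
    cert_block_6, cert_block_7, cert_block_8, cert_block_9, cert_block_10, cert_block_11,
    cert_block_12, cert_block_13, cert_block_14, cert_block_15, cert_block_16, cert_block_17,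
    cert_block_18, cert_block_19, cert_block_20, cert_block_21, cert_block_22]"

lemmas cert_table_defs =
  cert_block_0_def cert_block_1_def cert_block_2_def cert_block_3_def cert_block_4_def cert_block_5_def
  cert_block_6_def cert_block_7_def cert_block_8_def cert_block_9_def cert_block_10_def cert_block_11_def
  cert_block_12_def cert_block_13_def cert_block_14_def cert_block_15_def cert_block_16_def cert_block_17_def
  cert_block_18_def cert_block_19_def cert_block_20_def cert_block_21_def cert_block_22_def
  cert_blocks_def

definition cert_row :: "nat \<Rightarrow> int \<times> int \<times> nat \<times> int \<times> int" where
  "cert_row j = cert_blocks ! ((j - 1) div 24) ! ((j - 1) mod 24)"

definition cert_alpha :: "nat \<Rightarrow> int" where
  "cert_alpha j = fst (cert_row j)"

definition cert_d :: "nat \<Rightarrow> int" where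
  "cert_d j = fst (snd (cert_row j))"

definition cert_cut :: "nat \<Rightarrow> nat" where
  "cert_cut j = fst (snd (snd (cert_row j)))"

definition cert_psum :: "nat \<Rightarrow> int" where
  "cert_psum j = fst (snd (snd (snd (cert_row j))))"

definition cert_asum :: "nat \<Rightarrow> int" where
  "cert_asum j = snd (snd (snd (snd (cert_row j))))"

text \<open>valley_cert for the table, phrased so that evaluation looks up each row only once.\<close>

definition cert_row_ok :: "nat \<Rightarrow> bool" where
  "cert_row_ok j \<longleftrightarrow>
    (case cert_row j of (a, dj, q, p, pa) \<Rightarrow>
     case cert_row (Suc j) of (a', d', _, p', pa') \<Rightarrow>
     case cert_row q of (_, dq, _, pq, _) \<Rightarrow>
     case cert_row (q - 1) of (_, dq', _, _, _) \<Rightarrow>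
       0 \<le> dj \<and> dj \<le> a \<and> a - 3 * dj \<le> 40506 \<and> 40506 \<le> 3 * a + 3 * dj \<and>
       (j < 550 \<longrightarrow> a \<le> a') \<and>
       (Suc j < 120 \<longrightarrow> d' \<le> dj) \<and> (120 \<le> j \<and> j < 550 \<longrightarrow> dj \<le> d') \<and>
       p' = p + dj \<and> pa' = pa + a \<and>
       j \<le> q \<and> q \<le> 551 \<and> (q \<le> 550 \<longrightarrow> 120 \<le> q \<and> a \<le> dq) \<and> (j < q \<longrightarrow> dq' \<le> a) \<and>
       int (q - j) * a - (pq - p) \<le> 3913613)"

lemma cert_row_ok_iff:
  "cert_row_ok j \<longleftrightarrow>
    valley_cert 550 120 3913613 40506 cert_alpha cert_d cert_cut cert_psum cert_asum j"
  unfolding cert_row_ok_def valley_cert_def cert_alpha_def cert_d_def cert_cut_def cert_psum_def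
    cert_asum_def
  by (simp split: prod.splits)

text \<open>Let the simplifier index into the literal table without traversing it.\<close>

lemma nth_Cons_weak_cong: "n = n' \<Longrightarrow> (x # xs) ! n = (x # xs) ! n'"
  by simp

lemma nth_unfold: "xs = ys \<Longrightarrow> xs ! n = ys ! n"
  by simp

lemmas cert_lookup = cert_row_def cert_table_defs[THEN nth_unfold]

lemma cert_rows_ok_1: "\<forall>j\<in>{1..<111}. cert_row_ok j"
  by (simp add: cert_row_ok_def cert_lookup atLeastLessThan_nat_numeral
      cong: nth_Cons_weak_cong prod.case_cong_weak)

lemma cert_rows_ok_2: "\<forall>j\<in>{111..<221}. cert_row_ok j"
  by (simp add: cert_row_ok_def cert_lookup atLeastLessThan_nat_numeral
      cong: nth_Cons_weak_cong prod.case_cong_weak)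

lemma cert_rows_ok_3: "\<forall>j\<in>{221..<331}. cert_row_ok j"
  by (simp add: cert_row_ok_def cert_lookup atLeastLessThan_nat_numeral
      cong: nth_Cons_weak_cong prod.case_cong_weak)

lemma cert_rows_ok_4: "\<forall>j\<in>{331..<441}. cert_row_ok j"
  by (simp add: cert_row_ok_def cert_lookup atLeastLessThan_nat_numeral
      cong: nth_Cons_weak_cong prod.case_cong_weak)

lemma cert_rows_ok_5: "\<forall>j\<in>{441..<551}. cert_row_ok j"
  by (simp add: cert_row_ok_def cert_lookup atLeastLessThan_nat_numeral
      cong: nth_Cons_weak_cong prod.case_cong_weak)

lemma cert_valid:
  "\<forall>j\<in>{1..550}. valley_cert 550 120 3913613 40506 cert_alpha cert_d cert_cut cert_psum cert_asum j"
proof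
  fix j :: nat assume "j \<in> {1..550}"
  then have "j \<in> {1..<111} \<union> {111..<221} \<union> {221..<331} \<union> {331..<441} \<union> {441..<551}"
    by auto
  then have "cert_row_ok j"
    using cert_rows_ok_1 cert_rows_ok_2 cert_rows_ok_3 cert_rows_ok_4 cert_rows_ok_5 by blast
  then show "valley_cert 550 120 3913613 40506 cert_alpha cert_d cert_cut cert_psum cert_asum j"
    by (simp add: cert_row_ok_iff)
qed

theorem lemma4:
  shows "(SUP k\<in>{1::nat..}. lp_value k) \<ge> ereal 3.220"
proof -
  have "ereal 3.220 \<le>
      ereal (real_of_int (cert_asum (Suc 550)) / real_of_int (3913613 + cert_psum (Suc 550)))"
    by (simp add: cert_asum_def cert_psum_def cert_lookup cong: nth_Cons_weak_cong)
  also have "\<dots> \<le> lp_value 550"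
    by (rule lp_value_ge_valley_cert[OF cert_valid])
      (simp_all add: cert_asum_def cert_psum_def cert_lookup cong: nth_Cons_weak_cong)
  also have "\<dots> \<le> (SUP k\<in>{1::nat..}. lp_value k)"
    by (rule SUP_upper) simp
  finally show ?thesis .
qed

end
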